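(* Let $z$ be a positive integer and let $C$ and $D$ be quasi-cyclic LDPC codes with circulant matrices of size $z$, given by model matrices $\mathcal{H}_C$ and $\mathcal{H}_D$ (each with $L$ columns, all entries in $\{0,1,\dots,z-1\}\cup\{\infty\}$). Let $y$ be a positive integer dividing $z$. Let $C'$ (resp. $D'$) be the quasi-cyclic LDPC code with the same model matrix as $C$ (resp. $D$) but with circulant matrices of size $y$, where each finite shift $p$ is interpreted modulo $y$ (i.e. replaced by the $y\times y$ matrix $I_y(1)^{p}$). If $C$ and $D$ satisfy the twisted condition $D^{\perp}\subset C$, then $C'$ and $D'$ satisfy the twisted condition $D'^{\perp}\subset C'$.
   Context: All codes are binary linear codes over $\mathbb{F}_2$. For a linear code $D\subseteq\mathbb{F}_2^n$, its dual is $D^{\perp}=\{d'\in\mathbb{F}_2^n : d\,d'^{T}=0 \text{ for all } d\in D\}$. A pair of codes $C,D$ of the same length satisfies the twisted condition if $D^{\perp}\subset C$; if $H_C,H_D$ are parity-check matrices of $C,D$ (i.e. $C=\{x: H_Cx^T=0\}$, $D=\{x:H_Dx^T=0\}$), this is equivalent to $H_C H_D^{T}=0$. For a positive integer $z$, let $I_z(1)$ be the $z\times z$ circulant permutation matrix of a single circular right shift (entries $1$ at positions $(i,i+1)$ for $i<z$ and $(z,1)$, zero elsewhere), and $I_z(b)=I_z(1)^b$. A quasi-cyclic LDPC code with circulant matrices of size $z$ is specified by a model matrix $\mathcal{H}=(p(i,j))$ of size $J\times L$ with entries in $\{0,1,\dots,z-1\}\cup\{\infty\}$; its parity-check matrix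 $H$ is the $zJ\times zL$ binary matrix obtained by replacing each entry $p(i,j)\neq\infty$ by $I_z(p(i,j))$ and each $\infty$ by the $z\times z$ zero matrix, and the code is $\{x\in\mathbb{F}_2^{zL}: Hx^T=0\}$. The base matrix of the code is the $J\times L$ binary matrix with entry $1$ where $p(i,j)\neq\infty$ and $0$ where $p(i,j)=\infty$. *)

theory Defs
  imports Main "HOL-Library.Z2"
begin

text \<open>Binary vectors of length n are functions nat => bit vanishing outside {..<n}
  (positions 0..n-1). Matrices are functions nat => nat => bit with explicit sizes.
  A model matrix is p :: nat => nat => nat option, where None encodes infinity.\<close>

definition vec_len :: "nat \<Rightarrow> (nat \<Rightarrow> bit) \<Rightarrow> bool" where
  "vec_len n x \<longleftrightarrow> (\<forall>j\<ge>n. x j = 0)"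

definition dual_code :: "nat \<Rightarrow> (nat \<Rightarrow> bit) set \<Rightarrow> (nat \<Rightarrow> bit) set" where
  "dual_code n D = {x. vec_len n x \<and> (\<forall>d\<in>D. (\<Sum>j<n. d j * x j) = 0)}"

definition twisted :: "nat \<Rightarrow> (nat \<Rightarrow> bit) set \<Rightarrow> (nat \<Rightarrow> bit) set \<Rightarrow> bool" where
  "twisted n C D \<longleftrightarrow> dual_code n D \<subseteq> C"

text \<open>I_z(b) = I_z(1)^b, 0-indexed: entry (i,j) is 1 iff j = (i + b) mod z.\<close>
definition circ :: "nat \<Rightarrow> nat \<Rightarrow> nat \<Rightarrow> nat \<Rightarrow> bit" where
  "circ z b i j = (if j = (i + b) mod z then 1 else 0)"

definition model_matrix :: "nat \<Rightarrow> nat \<Rightarrow> nat \<Rightarrow> (nat \<Rightarrow> nat \<Rightarrow> nat option) \<Rightarrow> bool" where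
  "model_matrix z J L p \<longleftrightarrow> (\<forall>i<J. \<forall>j<L. \<forall>b. p i j = Some b \<longrightarrow> b < z)"

definition qc_H :: "nat \<Rightarrow> (nat \<Rightarrow> nat \<Rightarrow> nat option) \<Rightarrow> nat \<Rightarrow> nat \<Rightarrow> bit" where
  "qc_H z p i j = (case p (i div z) (j div z) of None \<Rightarrow> 0
                    | Some b \<Rightarrow> circ z b (i mod z) (j mod z))"

definition qc_code :: "nat \<Rightarrow> nat \<Rightarrow> nat \<Rightarrow> (nat \<Rightarrow> nat \<Rightarrow> nat option) \<Rightarrow> (nat \<Rightarrow> bit) set" where
  "qc_code z J L p = {x. vec_len (z * L) x \<and>
      (\<forall>i < z * J. (\<Sum>j < z * L. qc_H z p i j * x j) = 0)}"

end

theory Submission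
  imports Defs "HOL-Number_Theory.Cong"
begin

text \<open>Reducing the shifts modulo a divisor y of z is governed by the coordinate map
  \<pi> j = (j div z) y + (j mod z) mod y. The lift x \<mapsto> x \<circ> \<pi> and the fiber-sum
  fold along \<pi> are adjoint for the standard inner products, and summing the
  z-lifted parity-check matrix over a fiber of \<pi>, in either coordinate, gives the
  y-lifted one. Hence folding maps D into D', so lifting maps the dual of D' into
  the dual of D, which lies in C; and the lift of x lies in C only if x lies in C'.\<close>

definition fold_index :: "nat \<Rightarrow> nat \<Rightarrow> nat \<Rightarrow> nat" where
  "fold_index z y j = j div z * y + j mod z mod y"

definition lift_vec :: "nat \<Rightarrow> nat \<Rightarrow> nat \<Rightarrow> (nat \<Rightarrow> bit) \<Rightarrow> nat \<Rightarrow> bit" where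
  "lift_vec z y L x j = (if j < z * L then x (fold_index z y j) else 0)"

definition fold_vec :: "nat \<Rightarrow> nat \<Rightarrow> nat \<Rightarrow> (nat \<Rightarrow> bit) \<Rightarrow> nat \<Rightarrow> bit" where
  "fold_vec z y L d m =
     (if m < y * L then \<Sum>j\<in>{j\<in>{..<z * L}. fold_index z y j = m}. d j else 0)"

lemma fold_index_div [simp]: "0 < y \<Longrightarrow> fold_index z y j div y = j div z"
  by (simp add: fold_index_def)

lemma fold_index_mod [simp]: "0 < y \<Longrightarrow> fold_index z y j mod y = j mod z mod y"
  by (simp add: fold_index_def)

lemma block_index_less:
  fixes a t n :: nat
  assumes "a < L" "t < n"
  shows "a * n + t < n * L"
proof -
  have "a * n + t < (a + 1) * n" using assms(2) by simp
  also have "\<dots> \<le> L * n" using assms(1) by (intro mult_right_mono) auto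
  finally show ?thesis by (simp add: mult.commute)
qed

lemma fold_index_less:
  assumes "0 < y" "j < z * L"
  shows "fold_index z y j < y * L"
proof -
  have "j div z < L" using assms(2) by (simp add: less_mult_imp_div_less mult.commute)
  then show ?thesis
    unfolding fold_index_def using assms(1) by (intro block_index_less) auto
qed

lemma fold_index_fiber:
  assumes "0 < y" "m < y * L"
  shows "{j\<in>{..<z * L}. fold_index z y j = m}
           = (\<lambda>t. m div y * z + t) ` {t\<in>{..<z}. t mod y = m mod y}"
proof (intro equalityI subsetI)
  fix j assume "j \<in> {j\<in>{..<z * L}. fold_index z y j = m}"
  then have "j < z * L" and m: "fold_index z y j = m" by auto
  then have "0 < z" by (cases z) auto
  have "j = m div y * z + j mod z"
    using m assms(1) by (metis fold_index_div div_mult_mod_eq mult.commute)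
  moreover have "j mod z mod y = m mod y" using m assms(1) by auto
  ultimately show "j \<in> (\<lambda>t. m div y * z + t) ` {t\<in>{..<z}. t mod y = m mod y}"
    using \<open>0 < z\<close> by (metis (mono_tags) image_eqI lessThan_iff mem_Collect_eq mod_less_divisor)
next
  fix j assume "j \<in> (\<lambda>t. m div y * z + t) ` {t\<in>{..<z}. t mod y = m mod y}"
  then obtain t where j: "j = m div y * z + t" and t: "t < z" "t mod y = m mod y" by auto
  have "m div y < L" using assms(2) by (simp add: less_mult_imp_div_less mult.commute)
  then have "j < z * L" using j t(1) by (simp add: block_index_less)
  moreover have "fold_index z y j = m"
    using j t assms(1) by (simp add: fold_index_def)
  ultimately show "j \<in> {j\<in>{..<z * L}. fold_index z y j = m}" by simp
qed

lemma sum_fold_index_fiber: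
  assumes "0 < y" "m < y * L"
  shows "(\<Sum>j\<in>{j\<in>{..<z * L}. fold_index z y j = m}. f j)
           = (\<Sum>t\<in>{t\<in>{..<z}. t mod y = m mod y}. f (m div y * z + t))"
  unfolding fold_index_fiber[OF assms] by (rule sum.reindex_cong[where l = "\<lambda>t. m div y * z + t"]) auto

lemma sum_mult_fold_index:
  fixes f h :: "nat \<Rightarrow> 'a::comm_semiring_0"
  assumes "0 < y"
  shows "(\<Sum>j<z * L. f j * h (fold_index z y j))
           = (\<Sum>m<y * L. (\<Sum>j\<in>{j\<in>{..<z * L}. fold_index z y j = m}. f j) * h m)"
proof -
  have "(\<Sum>m<y * L. (\<Sum>j\<in>{j\<in>{..<z * L}. fold_index z y j = m}. f j) * h m)
      = (\<Sum>m<y * L. \<Sum>j\<in>{j\<in>{..<z * L}. fold_index z y j = m}. f j * h (fold_index z y j))"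
    by (simp add: sum_distrib_right)
  also have "\<dots> = (\<Sum>j<z * L. f j * h (fold_index z y j))"
    using fold_index_less[OF assms] by (intro sum.group) auto
  finally show ?thesis by simp
qed

lemma sum_mult_lift_vec:
  assumes "0 < y"
  shows "(\<Sum>j<z * L. d j * lift_vec z y L x j) = (\<Sum>m<y * L. fold_vec z y L d m * x m)"
  using sum_mult_fold_index[OF assms, of d x]
  by (simp add: lift_vec_def fold_vec_def)

lemma bij_betw_add_mod:
  fixes z b :: nat
  assumes "0 < z"
  shows "bij_betw (\<lambda>s. (s + b) mod z) {..<z} {..<z}"
proof -
  have "inj_on (\<lambda>s. (s + b) mod z) {..<z}"
    by (rule inj_onI) (simp add: cong_add_rcancel_nat[unfolded cong_def])
  moreover have "(\<lambda>s. (s + b) mod z) ` {..<z} \<subseteq> {..<z}" using assms by auto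
  ultimately show ?thesis by (simp add: bij_betw_def endo_inj_surj)
qed

lemma sum_add_mod_residue_class:
  fixes f :: "nat \<Rightarrow> 'a::comm_monoid_add"
  assumes "0 < z" "y dvd z" "r < y"
  shows "(\<Sum>s\<in>{s\<in>{..<z}. s mod y = r}. f ((s + b) mod z))
           = (\<Sum>t\<in>{t\<in>{..<z}. t mod y = (r + b) mod y}. f t)"
proof (rule sum.reindex_bij_betw)
  let ?shift = "\<lambda>s. (s + b) mod z"
  have residue: "?shift s mod y = (r + b) mod y \<longleftrightarrow> s mod y = r" for s
    using assms(2,3) cong_add_rcancel_nat[of s b r y] by (simp add: mod_mod_cancel cong_def)
  have bij: "bij_betw ?shift {..<z} {..<z}" by (rule bij_betw_add_mod[OF assms(1)])
  have image: "?shift ` {s\<in>{..<z}. s mod y = r} = {t\<in>{..<z}. t mod y = (r + b) mod y}"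
  proof (intro equalityI subsetI)
    fix t assume t: "t \<in> {t\<in>{..<z}. t mod y = (r + b) mod y}"
    then obtain s where "s < z" "t = ?shift s"
      using bij unfolding bij_betw_def by (metis (no_types, lifting) imageE lessThan_iff mem_Collect_eq)
    then show "t \<in> ?shift ` {s\<in>{..<z}. s mod y = r}"
      using t residue[of s] by auto
  qed (use assms(1) residue in auto)
  show "bij_betw ?shift {s\<in>{..<z}. s mod y = r} {t\<in>{..<z}. t mod y = (r + b) mod y}"
    by (rule bij_betw_subset[OF bij _ image]) auto
qed

lemma sum_qc_H_column_fiber:
  assumes "0 < z" "0 < y" "y dvd z" "m < y * L"
  shows "(\<Sum>j\<in>{j\<in>{..<z * L}. fold_index z y j = m}. qc_H z p i j) = qc_H y p (fold_index z y i) m"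
proof -
  define S where "S = {t\<in>{..<z}. t mod y = m mod y}"
  have block: "(m div y * z + t) div z = m div y" if "t \<in> S" for t
    using that assms(1) by (auto simp: S_def)
  have "(\<Sum>j\<in>{j\<in>{..<z * L}. fold_index z y j = m}. qc_H z p i j)
      = (\<Sum>t\<in>S. qc_H z p i (m div y * z + t))"
    unfolding S_def by (rule sum_fold_index_fiber[OF assms(2,4)])
  also have "\<dots> = qc_H y p (fold_index z y i) m"
  proof (cases "p (i div z) (m div y)")
    case None
    then show ?thesis using assms(2) by (simp add: qc_H_def block)
  next
    case (Some b)
    have "(\<Sum>t\<in>S. qc_H z p i (m div y * z + t)) = (\<Sum>t\<in>S. if t = (i mod z + b) mod z then 1 else 0)"
      using Some by (intro sum.cong refl) (simp add: qc_H_def circ_def S_def)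
    also have "\<dots> = (if (i mod z + b) mod y = m mod y then 1 else 0)"
      using assms(1,3) by (simp add: S_def mod_mod_cancel)
    also have "\<dots> = qc_H y p (fold_index z y i) m"
      using Some assms(2) by (simp add: qc_H_def circ_def mod_add_left_eq)
    finally show ?thesis .
  qed
  finally show ?thesis .
qed

lemma sum_qc_H_row_fiber:
  assumes "0 < z" "0 < y" "y dvd z" "i < y * J"
  shows "(\<Sum>k\<in>{k\<in>{..<z * J}. fold_index z y k = i}. qc_H z p k j) = qc_H y p i (fold_index z y j)"
proof -
  define S where "S = {s\<in>{..<z}. s mod y = i mod y}"
  have block: "(i div y * z + s) div z = i div y" if "s \<in> S" for s
    using that assms(1) by (auto simp: S_def)
  have "(\<Sum>k\<in>{k\<in>{..<z * J}. fold_index z y k = i}. qc_H z p k j)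
      = (\<Sum>s\<in>S. qc_H z p (i div y * z + s) j)"
    unfolding S_def by (rule sum_fold_index_fiber[OF assms(2,4)])
  also have "\<dots> = qc_H y p i (fold_index z y j)"
  proof (cases "p (i div y) (j div z)")
    case None
    then show ?thesis using assms(2) by (simp add: qc_H_def block)
  next
    case (Some b)
    have "(\<Sum>s\<in>S. qc_H z p (i div y * z + s) j)
        = (\<Sum>s\<in>S. (\<lambda>t. if j mod z = t then 1 else 0) ((s + b) mod z))"
      using Some by (intro sum.cong refl) (simp add: qc_H_def circ_def S_def)
    also have "\<dots> = (\<Sum>t\<in>{t\<in>{..<z}. t mod y = (i mod y + b) mod y}. if j mod z = t then 1 else 0)"
      unfolding S_def using assms(1-3) by (intro sum_add_mod_residue_class) auto
    also have "\<dots> = (if j mod z mod y = (i mod y + b) mod y then 1 else 0)"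
      using assms(1) by simp
    also have "\<dots> = qc_H y p i (fold_index z y j)"
      using Some assms(2) by (simp add: qc_H_def circ_def)
    finally show ?thesis .
  qed
  finally show ?thesis .
qed

lemma sum_qc_H_mult_lift_vec:
  assumes "0 < z" "0 < y" "y dvd z"
  shows "(\<Sum>j<z * L. qc_H z p k j * lift_vec z y L x j)
           = (\<Sum>m<y * L. qc_H y p (fold_index z y k) m * x m)"
proof -
  have "(\<Sum>j<z * L. qc_H z p k j * lift_vec z y L x j)
      = (\<Sum>m<y * L. (\<Sum>j\<in>{j\<in>{..<z * L}. fold_index z y j = m}. qc_H z p k j) * x m)"
    using sum_mult_fold_index[OF assms(2), of "qc_H z p k" x] by (simp add: lift_vec_def)
  also have "\<dots> = (\<Sum>m<y * L. qc_H y p (fold_index z y k) m * x m)"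
    using sum_qc_H_column_fiber[OF assms] by simp
  finally show ?thesis .
qed

lemma sum_qc_H_mult_fold_vec:
  assumes "0 < z" "0 < y" "y dvd z" "i < y * J"
  shows "(\<Sum>m<y * L. qc_H y p i m * fold_vec z y L d m)
           = (\<Sum>k\<in>{k\<in>{..<z * J}. fold_index z y k = i}. \<Sum>j<z * L. qc_H z p k j * d j)"
proof -
  have "(\<Sum>m<y * L. qc_H y p i m * fold_vec z y L d m)
      = (\<Sum>j<z * L. d j * qc_H y p i (fold_index z y j))"
    unfolding sum_mult_fold_index[OF assms(2)]
    by (rule sum.cong[OF refl]) (simp add: fold_vec_def mult.commute)
  also have "\<dots> = (\<Sum>j<z * L. d j * (\<Sum>k\<in>{k\<in>{..<z * J}. fold_index z y k = i}. qc_H z p k j))"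
    using sum_qc_H_row_fiber[OF assms] by simp
  also have "\<dots> = (\<Sum>k\<in>{k\<in>{..<z * J}. fold_index z y k = i}. \<Sum>j<z * L. d j * qc_H z p k j)"
    unfolding sum_distrib_left by (rule sum.swap)
  also have "\<dots> = (\<Sum>k\<in>{k\<in>{..<z * J}. fold_index z y k = i}. \<Sum>j<z * L. qc_H z p k j * d j)"
    by (simp only: mult.commute)
  finally show ?thesis .
qed

lemma fold_vec_mem_qc_code:
  assumes "0 < z" "0 < y" "y dvd z" "d \<in> qc_code z J L p"
  shows "fold_vec z y L d \<in> qc_code y J L p"
  unfolding qc_code_def
proof (intro CollectI conjI allI impI)
  show "vec_len (y * L) (fold_vec z y L d)" by (simp add: vec_len_def fold_vec_def)
next
  have rows: "(\<Sum>j<z * L. qc_H z p k j * d j) = 0" if "k < z * J" for k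
    using assms(4) that unfolding qc_code_def by blast
  fix i assume "i < y * J"
  show "(\<Sum>m<y * L. qc_H y p i m * fold_vec z y L d m) = 0"
    unfolding sum_qc_H_mult_fold_vec[OF assms(1-3) \<open>i < y * J\<close>]
    by (rule sum.neutral) (use rows in blast)
qed

lemma qc_code_if_lift_vec_mem:
  assumes "0 < z" "0 < y" "y dvd z"
    and "vec_len (y * L) x" "lift_vec z y L x \<in> qc_code z J L p"
  shows "x \<in> qc_code y J L p"
  unfolding qc_code_def
proof (intro CollectI conjI allI impI)
  fix i assume i: "i < y * J"
  define k where "k = i div y * z + i mod y"
  have "i mod y < z" using assms(1-3) mod_less_divisor[of y i] dvd_imp_le[of y z] by linarith
  moreover have "i div y < J" using i by (simp add: less_mult_imp_div_less mult.commute)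
  ultimately have "k < z * J" and "fold_index z y k = i"
    by (simp_all add: k_def block_index_less fold_index_def)
  then show "(\<Sum>j<y * L. qc_H y p i j * x j) = 0"
    using assms(5) sum_qc_H_mult_lift_vec[OF assms(1-3), of p k L x]
    by (simp add: qc_code_def)
qed (rule assms(4))

lemma lift_vec_mem_dual_code:
  assumes "0 < z" "0 < y" "y dvd z" "x \<in> dual_code (y * L) (qc_code y J L p)"
  shows "lift_vec z y L x \<in> dual_code (z * L) (qc_code z J L p)"
  unfolding dual_code_def
proof (intro CollectI conjI ballI)
  show "vec_len (z * L) (lift_vec z y L x)" by (simp add: vec_len_def lift_vec_def)
next
  fix d assume "d \<in> qc_code z J L p"
  then have "fold_vec z y L d \<in> qc_code y J L p" by (rule fold_vec_mem_qc_code[OF assms(1-3)])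
  then show "(\<Sum>j<z * L. d j * lift_vec z y L x j) = 0"
    using assms(4) unfolding sum_mult_lift_vec[OF assms(2)] dual_code_def by blast
qed

theorem mainTheorem1:
  fixes z y JC JD L :: nat and pC pD :: "nat \<Rightarrow> nat \<Rightarrow> nat option"
  assumes "0 < z" and "0 < y" and "y dvd z"
    and "model_matrix z JC L pC" and "model_matrix z JD L pD"
    and "twisted (z * L) (qc_code z JC L pC) (qc_code z JD L pD)"
  shows "twisted (y * L) (qc_code y JC L pC) (qc_code y JD L pD)"
  unfolding twisted_def
proof
  fix x assume x: "x \<in> dual_code (y * L) (qc_code y JD L pD)"
  then have "lift_vec z y L x \<in> qc_code z JC L pC"
    using lift_vec_mem_dual_code[OF assms(1-3)] assms(6) by (auto simp: twisted_def)
  moreover have "vec_len (y * L) x" using x by (simp add: dual_code_def)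
  ultimately show "x \<in> qc_code y JC L pC"
    using qc_code_if_lift_vec_mem[OF assms(1-3)] by blast
qed

end
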